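(* Let $A\in\mathbb{R}^{m\times n}$, $d\ge n$, let $\{u_\ell\}_{\ell\in[L]}$ be a projective $2$-design for $\mathbb{R}^d$, let $\Pi:\mathbb{R}^d\to\mathbb{R}^n$ be the projection onto the first $n$ coordinates, and let $z$ be uniformly distributed over $\{\sqrt d\,\Pi u_\ell:\ell\in[L]\}$. Let $x\in\mathbb{R}^n$ be a unit vector and $y:=Azz^\top x$. Let $\gamma>0$ and $\eta\in(0,1)$, and choose positive integers $$J\ge\frac{4e^2\|A\|_{2\to\infty}^2}{\gamma^2},\qquad K\ge 2\log\Big(\frac m\eta\Big).$$ Let $\{y_{jk}\}_{j\in[J],k\in[K]}$ be independent copies of $y$, set $\overline y_k:=\frac1J\sum_{j\in[J]}y_{jk}$, and let $\hat\mu\in\mathbb{R}^m$ be the entrywise median of $\{\overline y_k\}_{k\in[K]}$, i.e. $\hat\mu_i=\operatorname{median}\{(\overline y_k)_i\}_{k\in[K]}$. Then $\|\hat\mu-Ax\|_\infty<\gamma$ with probability at least $1-\eta$.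
   Context: $\|A\|_{2\to\infty}$ denotes the largest Euclidean norm of a row of $A$; $\log$ is the natural logarithm. The median of $K$ reals is the middle order statistic (for even $K$, the average of the two middle order statistics). A projective $2$-design for $\mathbb{R}^d$ is a finite family $\{u_\ell\}_{\ell\in[L]}$ of unit vectors with $\frac1L\sum_\ell p(u_\ell)=\int_{S^{d-1}}p\,d\sigma$ for every homogeneous polynomial $p$ of degree $0$, $2$ or $4$ in $d$ real variables, where $\sigma$ is the uniform probability measure on $S^{d-1}$. *)

theory Defs
  imports "HOL-Analysis.Analysis" "HOL-Probability.Probability"
begin

text \<open>Vectors in R^k are modelled as functions nat => real, only indices < k matter.
  Matrices in R^(m x n) are functions nat => nat => real (row, column).\<close>

definition sqnorm :: "nat \<Rightarrow> (nat \<Rightarrow> real) \<Rightarrow> real" where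
  "sqnorm k x = (\<Sum>i<k. (x i)\<^sup>2)"

definition norm_2_inf :: "nat \<Rightarrow> nat \<Rightarrow> (nat \<Rightarrow> nat \<Rightarrow> real) \<Rightarrow> real" where
  "norm_2_inf m n A = Max (insert 0 ((\<lambda>i. sqrt (\<Sum>j<n. (A i j)\<^sup>2)) ` {..<m}))"

abbreviation lebesgue_d :: "nat \<Rightarrow> (nat \<Rightarrow> real) measure" where
  "lebesgue_d d \<equiv> Pi\<^sub>M {..<d} (\<lambda>_. lborel)"

definition unit_ball_d :: "nat \<Rightarrow> (nat \<Rightarrow> real) set" where
  "unit_ball_d d = {x \<in> space (lebesgue_d d). sqnorm d x \<le> 1}"

text \<open>Uniform probability measure sigma on S^(d-1): the image of the uniform
  distribution on the unit ball under radial projection x |-> x/|x|.\<close>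
definition sphere_measure :: "nat \<Rightarrow> (nat \<Rightarrow> real) measure" where
  "sphere_measure d =
     distr (uniform_measure (lebesgue_d d) (unit_ball_d d)) (lebesgue_d d)
       (\<lambda>x. restrict (\<lambda>i. x i / sqrt (sqnorm d x)) {..<d})"

text \<open>A homogeneous polynomial in d variables with monomial exponents in S
  (all of total degree k) and coefficients c.\<close>
definition poly_eval :: "nat \<Rightarrow> (nat \<Rightarrow> nat) set \<Rightarrow> ((nat \<Rightarrow> nat) \<Rightarrow> real) \<Rightarrow> (nat \<Rightarrow> real) \<Rightarrow> real" where
  "poly_eval d S c x = (\<Sum>\<alpha>\<in>S. c \<alpha> * (\<Prod>i<d. x i ^ \<alpha> i))"

definition homogeneous_exps :: "nat \<Rightarrow> nat \<Rightarrow> (nat \<Rightarrow> nat) set \<Rightarrow> bool" where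
  "homogeneous_exps d k S \<longleftrightarrow> finite S \<and> (\<forall>\<alpha>\<in>S. (\<Sum>i<d. \<alpha> i) = k \<and> (\<forall>i\<ge>d. \<alpha> i = 0))"

definition projective_2_design :: "nat \<Rightarrow> nat \<Rightarrow> (nat \<Rightarrow> nat \<Rightarrow> real) \<Rightarrow> bool" where
  "projective_2_design d L u \<longleftrightarrow>
     L > 0 \<and> (\<forall>l<L. sqnorm d (u l) = 1) \<and>
     (\<forall>k\<in>{0,2,4}. \<forall>S c. homogeneous_exps d k S \<longrightarrow>
        (1 / real L) * (\<Sum>l<L. poly_eval d S c (u l))
          = integral\<^sup>L (sphere_measure d) (poly_eval d S c))"

definition median :: "nat \<Rightarrow> (nat \<Rightarrow> real) \<Rightarrow> real" where
  "median K f = (let xs = sort (map f [0..<K]) in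
     if odd K then xs ! (K div 2) else (xs ! (K div 2 - 1) + xs ! (K div 2)) / 2)"

text \<open>z = sqrt d * Pi u_l (first n coordinates), and y = A z z^T x, for design index l.\<close>
definition z_vec :: "nat \<Rightarrow> nat \<Rightarrow> (nat \<Rightarrow> nat \<Rightarrow> real) \<Rightarrow> nat \<Rightarrow> nat \<Rightarrow> real" where
  "z_vec n d u l = (\<lambda>j. if j < n then sqrt (real d) * u l j else 0)"

definition y_vec :: "nat \<Rightarrow> nat \<Rightarrow> (nat \<Rightarrow> nat \<Rightarrow> real) \<Rightarrow> (nat \<Rightarrow> nat \<Rightarrow> real) \<Rightarrow> (nat \<Rightarrow> real) \<Rightarrow> nat \<Rightarrow> nat \<Rightarrow> real" where
  "y_vec n d A u x l = (\<lambda>i. (\<Sum>j<n. A i j * z_vec n d u l j) * (\<Sum>j<n. z_vec n d u l j * x j))"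

end

(*
  Averages over a projective 2-design equal sphere integrals for the monomials of degree 2 and
  4, and these are pinned down by symmetry: coordinate reflections kill every monomial with an
  odd exponent, quarter turns make all coordinates alike, and an eighth turn in a coordinate
  plane gives E v_a^4 = 3 E v_a^2 v_b^2. Hence E v_i v_j = delta_ij / d and
  E v_i v_j v_k v_m = (delta_ij delta_km + delta_ik delta_jm + delta_jk delta_im) / (d (d + 2)),
  so each coordinate of y = A z z^T x has mean (A x)_i and variance at most 2 |a_i|^2, where a_i
  is the i-th row of A. By Chebyshev, a block mean is gamma-far from (A x)_i with probability
  p <= 1 / (2 e^2); the median of K block means is far only if at least ceil(K/2) of them are,
  which by a union bound over index sets has probability at most
  (K choose ceil(K/2)) p^ceil(K/2) <= (4 p)^ceil(K/2) <= exp (- K / 2) <= eta / m.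
  A union bound over the m rows concludes.
*)
theory Submission
  imports Defs
begin

definition shear :: "nat \<Rightarrow> nat \<Rightarrow> real \<Rightarrow> real \<Rightarrow> (nat \<Rightarrow> real) \<Rightarrow> nat \<Rightarrow> real" where
  "shear a b s c x = x(a := s * x a + c * x b)"

definition plane_rotation :: "nat \<Rightarrow> nat \<Rightarrow> real \<Rightarrow> real \<Rightarrow> (nat \<Rightarrow> real) \<Rightarrow> nat \<Rightarrow> real" where
  "plane_rotation a b c s x = x(a := c * x a - s * x b, b := s * x a + c * x b)"

definition coord_flip :: "nat \<Rightarrow> (nat \<Rightarrow> real) \<Rightarrow> nat \<Rightarrow> real" where
  "coord_flip a x = x(a := - x a)"

lemma measurable_shear:
  assumes "a < d" "b < d"
  shows "shear a b s c \<in> lebesgue_d d \<rightarrow>\<^sub>M lebesgue_d d"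
proof -
  have "(\<lambda>x i. if i = a then s * x a + c * x b else x i) \<in> lebesgue_d d \<rightarrow>\<^sub>M lebesgue_d d"
    by (rule measurable_PiM_single') (use assms in \<open>auto simp: space_PiM PiE_def extensional_def\<close>)
  moreover have "(\<lambda>x i. if i = a then s * x a + c * x b else x i) = shear a b s c"
    by (auto simp: shear_def fun_eq_iff)
  ultimately show ?thesis by simp
qed

lemma nn_integral_shear_lebesgue_d:
  assumes ad: "a < d" and bd: "b < d" and ab: "a \<noteq> b" and s: "\<bar>s\<bar> = 1"
    and f[measurable]: "f \<in> borel_measurable (lebesgue_d d)"
  shows "(\<integral>\<^sup>+x. f (shear a b s c x) \<partial>lebesgue_d d) = (\<integral>\<^sup>+x. f x \<partial>lebesgue_d d)"
proof -
  interpret product_sigma_finite "\<lambda>_. lborel :: real measure" by standard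
  define I where "I = {..<d} - {a}"
  have dI: "{..<d} = insert a I" and fI: "finite I" and aI: "a \<notin> I"
    using ad by (auto simp: I_def)
  have fm: "f \<in> borel_measurable (Pi\<^sub>M (insert a I) (\<lambda>_. lborel))"
    using f dI by simp
  have shm: "shear a b s c \<in> Pi\<^sub>M (insert a I) (\<lambda>_. lborel) \<rightarrow>\<^sub>M Pi\<^sub>M (insert a I) (\<lambda>_. lborel)"
    using measurable_shear[OF ad bd] dI by simp
  \<comment> \<open>Fubini: integrate the coordinate \<open>a\<close> innermost, where the shear is a translation.\<close>
  have "(\<integral>\<^sup>+x. f (shear a b s c x) \<partial>lebesgue_d d)
     = (\<integral>\<^sup>+x. (\<integral>\<^sup>+y. f (shear a b s c (x(a := y))) \<partial>lborel) \<partial>Pi\<^sub>M I (\<lambda>_. lborel))"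
    unfolding dI using fI aI shm fm
    by (subst product_nn_integral_insert) (auto intro: measurable_compose)
  also have "\<dots> = (\<integral>\<^sup>+x. (\<integral>\<^sup>+y. f (x(a := y)) \<partial>lborel) \<partial>Pi\<^sub>M I (\<lambda>_. lborel))"
  proof (rule nn_integral_cong)
    fix x assume x: "x \<in> space (Pi\<^sub>M I (\<lambda>_. lborel :: real measure))"
    have gm: "(\<lambda>y. f (x(a := y))) \<in> borel_measurable borel"
      using x fm by measurable
    have "(\<integral>\<^sup>+y. f (shear a b s c (x(a := y))) \<partial>lborel) = (\<integral>\<^sup>+y. f (x(a := c * x b + s * y)) \<partial>lborel)"
      using ab by (simp add: shear_def add.commute)
    also have "\<dots> = (\<integral>\<^sup>+y. f (x(a := y)) \<partial>lborel)"
      using nn_integral_real_affine[OF gm, of s "c * x b"] s by auto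
    finally show "(\<integral>\<^sup>+y. f (shear a b s c (x(a := y))) \<partial>lborel) = (\<integral>\<^sup>+y. f (x(a := y)) \<partial>lborel)" .
  qed
  also have "\<dots> = (\<integral>\<^sup>+x. f x \<partial>lebesgue_d d)"
    unfolding dI using fI aI fm by (subst product_nn_integral_insert) auto
  finally show ?thesis .
qed

lemma distr_eq_if_nn_integral_invariant:
  assumes T[measurable]: "T \<in> M \<rightarrow>\<^sub>M M"
    and invariant: "\<And>f. f \<in> borel_measurable M \<Longrightarrow> (\<integral>\<^sup>+x. f (T x) \<partial>M) = (\<integral>\<^sup>+x. f x \<partial>M)"
  shows "distr M M T = M"
proof (rule measure_eqI)
  fix A assume "A \<in> sets (distr M M T)"
  hence A: "A \<in> sets M" by simp
  have "emeasure (distr M M T) A = (\<integral>\<^sup>+x. indicator A x \<partial>distr M M T)"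
    using A by (simp del: nn_integral_indicator add: nn_integral_indicator[symmetric])
  also have "\<dots> = (\<integral>\<^sup>+x. indicator A (T x) \<partial>M)"
    using A by (intro nn_integral_distr) auto
  also have "\<dots> = emeasure M A"
    using A by (simp add: invariant)
  finally show "emeasure (distr M M T) A = emeasure M A" .
qed simp

lemma distr_shear_lebesgue_d:
  assumes "a < d" "b < d" "a \<noteq> b" "\<bar>s\<bar> = 1"
  shows "distr (lebesgue_d d) (lebesgue_d d) (shear a b s c) = lebesgue_d d"
  using assms
  by (intro distr_eq_if_nn_integral_invariant measurable_shear nn_integral_shear_lebesgue_d)

lemma plane_rotation_eq_shears:
  assumes ab: "a \<noteq> b" and cs: "c\<^sup>2 + s\<^sup>2 = 1" and c: "c \<noteq> -1"
  defines "t \<equiv> - s / (1 + c)"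
  shows "plane_rotation a b c s = shear a b 1 t \<circ> shear b a 1 s \<circ> shear a b 1 t"
proof -
  have c1: "1 + c \<noteq> 0" using c by auto
  have e1: "1 + s * t = c"
    using c1 cs unfolding t_def by (simp add: field_simps power2_eq_square)
  have e2: "2 * t + s * t\<^sup>2 = - s"
  proof -
    have "2 * t + s * t\<^sup>2 = t * (1 + (1 + s * t))" by (simp add: algebra_simps power2_eq_square)
    also have "\<dots> = - s" using c1 e1 unfolding t_def by simp
    finally show ?thesis .
  qed
  have "x a + t * x b + t * (x b + s * (x a + t * x b)) = (1 + s * t) * x a + (2 * t + s * t\<^sup>2) * x b"
       "x b + s * (x a + t * x b) = s * x a + (1 + s * t) * x b" for x :: "nat \<Rightarrow> real"
    by (simp_all add: algebra_simps power2_eq_square)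
  then have "x a + t * x b + t * (x b + s * (x a + t * x b)) = c * x a - s * x b"
       "x b + s * (x a + t * x b) = s * x a + c * x b" for x :: "nat \<Rightarrow> real"
    by (simp_all only: e1 e2)
  then show ?thesis
    using ab by (auto simp: plane_rotation_def shear_def fun_eq_iff)
qed

lemma measurable_plane_rotation:
  assumes "a < d" "b < d"
  shows "plane_rotation a b c s \<in> lebesgue_d d \<rightarrow>\<^sub>M lebesgue_d d"
proof -
  have "(\<lambda>x i. if i = b then s * x a + c * x b else if i = a then c * x a - s * x b else x i)
          \<in> lebesgue_d d \<rightarrow>\<^sub>M lebesgue_d d"
    by (rule measurable_PiM_single') (use assms in \<open>auto simp: space_PiM PiE_def extensional_def\<close>)
  moreover have "(\<lambda>x i. if i = b then s * x a + c * x b else if i = a then c * x a - s * x b else x i)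
      = plane_rotation a b c s"
    by (auto simp: plane_rotation_def fun_eq_iff)
  ultimately show ?thesis by simp
qed

lemma distr_comp_eq_self:
  assumes "f \<in> M \<rightarrow>\<^sub>M M" "g \<in> M \<rightarrow>\<^sub>M M" "distr M M f = M" "distr M M g = M"
  shows "distr M M (g \<circ> f) = M"
  using distr_distr[OF assms(2,1)] assms(3,4) by simp

lemma distr_plane_rotation_lebesgue_d:
  assumes ad: "a < d" and bd: "b < d" and ab: "a \<noteq> b" and cs: "c\<^sup>2 + s\<^sup>2 = 1" and c: "c \<noteq> -1"
  shows "distr (lebesgue_d d) (lebesgue_d d) (plane_rotation a b c s) = lebesgue_d d"
proof -
  define t where "t = - s / (1 + c)"
  let ?f = "shear a b 1 t" and ?g = "shear b a 1 s"
  have meas: "?f \<in> lebesgue_d d \<rightarrow>\<^sub>M lebesgue_d d" "?g \<in> lebesgue_d d \<rightarrow>\<^sub>M lebesgue_d d"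
    using ad bd by (simp_all add: measurable_shear)
  have pres: "distr (lebesgue_d d) (lebesgue_d d) ?f = lebesgue_d d"
    "distr (lebesgue_d d) (lebesgue_d d) ?g = lebesgue_d d"
    using ad bd ab by (simp_all add: distr_shear_lebesgue_d)
  have "distr (lebesgue_d d) (lebesgue_d d) (?f \<circ> (?g \<circ> ?f)) = lebesgue_d d"
    using meas pres
    by (intro distr_comp_eq_self measurable_comp[of ?f _ _ ?g] distr_comp_eq_self) auto
  then show ?thesis
    unfolding plane_rotation_eq_shears[OF ab cs c] t_def by (simp add: comp_assoc)
qed

lemma coord_flip_eq_shear: "coord_flip a = shear a b (-1) 0"
  by (auto simp: coord_flip_def shear_def fun_eq_iff)

definition sphere_proj :: "nat \<Rightarrow> (nat \<Rightarrow> real) \<Rightarrow> nat \<Rightarrow> real" where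
  "sphere_proj d x = restrict (\<lambda>i. x i / sqrt (sqnorm d x)) {..<d}"

lemma sqnorm_measurable[measurable]: "sqnorm d \<in> borel_measurable (lebesgue_d d)"
  unfolding sqnorm_def by measurable

lemma unit_ball_d_sets[measurable]: "unit_ball_d d \<in> sets (lebesgue_d d)"
  unfolding unit_ball_d_def by measurable

lemma sphere_proj_measurable[measurable]: "sphere_proj d \<in> lebesgue_d d \<rightarrow>\<^sub>M lebesgue_d d"
  unfolding sphere_proj_def by measurable

lemma sphere_measure_eq_distr_sphere_proj:
  "sphere_measure d = distr (uniform_measure (lebesgue_d d) (unit_ball_d d)) (lebesgue_d d) (sphere_proj d)"
  unfolding sphere_measure_def sphere_proj_def ..

lemma sets_sphere_measure[simp]: "sets (sphere_measure d) = sets (lebesgue_d d)"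
  by (simp add: sphere_measure_def)

lemma space_sphere_measure[simp]: "space (sphere_measure d) = space (lebesgue_d d)"
  by (simp add: sphere_measure_def)

lemma abs_sphere_proj_le_1:
  assumes "i < d"
  shows "\<bar>sphere_proj d x i\<bar> \<le> 1"
proof (cases "sqnorm d x = 0")
  case False
  have "(x i)\<^sup>2 \<le> sqnorm d x"
    unfolding sqnorm_def using assms by (intro member_le_sum) auto
  then have "\<bar>x i\<bar> \<le> sqrt (sqnorm d x)"
    using real_le_rsqrt by (metis real_sqrt_abs real_sqrt_le_iff)
  then show ?thesis
    using assms False by (simp add: sphere_proj_def abs_div divide_le_eq_1)
qed (use assms in \<open>simp add: sphere_proj_def\<close>)

lemma distr_sphere_measure_eq_self:
  assumes T[measurable]: "T \<in> lebesgue_d d \<rightarrow>\<^sub>M lebesgue_d d"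
    and leb: "distr (lebesgue_d d) (lebesgue_d d) T = lebesgue_d d"
    and norm: "\<And>x. sqnorm d (T x) = sqnorm d x"
    and proj: "\<And>x. T (sphere_proj d x) = sphere_proj d (T x)"
  shows "distr (sphere_measure d) (lebesgue_d d) T = sphere_measure d"
proof -
  let ?L = "lebesgue_d d"
  let ?U = "uniform_measure ?L (unit_ball_d d)"
  have ball: "T -` unit_ball_d d \<inter> space ?L = unit_ball_d d"
    using measurable_space[OF T] by (auto simp: unit_ball_d_def norm)
  have "distr ?U ?L T = ?U"
  proof (rule measure_eqI)
    fix A assume "A \<in> sets (distr ?U ?L T)"
    then have A: "A \<in> sets ?L" by simp
    have "emeasure (distr ?U ?L T) A
        = emeasure ?L (unit_ball_d d \<inter> (T -` A \<inter> space ?L)) / emeasure ?L (unit_ball_d d)"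
      using A by (simp add: emeasure_distr)
    also have "unit_ball_d d \<inter> (T -` A \<inter> space ?L) = T -` (unit_ball_d d \<inter> A) \<inter> space ?L"
      using ball by auto
    also have "emeasure ?L \<dots> = emeasure (distr ?L ?L T) (unit_ball_d d \<inter> A)"
      using A by (simp add: emeasure_distr)
    finally show "emeasure (distr ?U ?L T) A = emeasure ?U A"
      using A by (simp add: leb)
  qed simp
  have "distr (sphere_measure d) ?L T = distr ?U ?L (T \<circ> sphere_proj d)"
    unfolding sphere_measure_eq_distr_sphere_proj by (rule distr_distr) auto
  also have "\<dots> = distr ?U ?L (sphere_proj d \<circ> T)"
    by (simp add: comp_def proj)
  also have "\<dots> = distr (distr ?U ?L T) ?L (sphere_proj d)"
    by (rule distr_distr[symmetric]) auto
  finally show ?thesis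
    using \<open>distr ?U ?L T = ?U\<close> sphere_measure_eq_distr_sphere_proj by simp
qed

lemma sqnorm_fun_upd:
  assumes "a < d"
  shows "sqnorm d (x(a := p)) = sqnorm d x - (x a)\<^sup>2 + p\<^sup>2"
proof -
  have "sqnorm d (x(a := p)) = p\<^sup>2 + (\<Sum>i\<in>{..<d} - {a}. (x i)\<^sup>2)"
    unfolding sqnorm_def using assms by (subst sum.remove[of _ a]) (auto intro!: sum.cong)
  moreover have "sqnorm d x = (x a)\<^sup>2 + (\<Sum>i\<in>{..<d} - {a}. (x i)\<^sup>2)"
    unfolding sqnorm_def using assms by (subst sum.remove[of _ a]) auto
  ultimately show ?thesis by simp
qed

lemma sqnorm_plane_rotation:
  assumes "a < d" "b < d" "a \<noteq> b" "c\<^sup>2 + s\<^sup>2 = 1"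
  shows "sqnorm d (plane_rotation a b c s x) = sqnorm d x"
proof -
  have "sqnorm d (plane_rotation a b c s x)
      = sqnorm d x + (c\<^sup>2 + s\<^sup>2 - 1) * ((x a)\<^sup>2 + (x b)\<^sup>2)"
    using assms(1-3) by (simp add: plane_rotation_def sqnorm_fun_upd power2_eq_square algebra_simps)
  then show ?thesis using assms by simp
qed

lemma distr_sphere_measure_plane_rotation:
  assumes "a < d" "b < d" "a \<noteq> b" "c\<^sup>2 + s\<^sup>2 = 1" "c \<noteq> -1"
  shows "distr (sphere_measure d) (lebesgue_d d) (plane_rotation a b c s) = sphere_measure d"
proof (rule distr_sphere_measure_eq_self)
  fix x
  show "plane_rotation a b c s (sphere_proj d x) = sphere_proj d (plane_rotation a b c s x)"
    using assms unfolding sphere_proj_def sqnorm_plane_rotation[OF assms(1-4)]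
    by (auto simp: plane_rotation_def fun_eq_iff diff_divide_distrib add_divide_distrib)
qed (use assms in \<open>simp_all add: measurable_plane_rotation distr_plane_rotation_lebesgue_d
  sqnorm_plane_rotation\<close>)

lemma distr_sphere_measure_coord_flip:
  assumes "a < d" "b < d" "a \<noteq> b"
  shows "distr (sphere_measure d) (lebesgue_d d) (coord_flip a) = sphere_measure d"
proof (rule distr_sphere_measure_eq_self)
  fix x
  show "sqnorm d (coord_flip a x) = sqnorm d x"
    using assms by (simp add: coord_flip_def sqnorm_fun_upd)
  show "coord_flip a (sphere_proj d x) = sphere_proj d (coord_flip a x)"
    using assms by (auto simp: coord_flip_def sphere_proj_def fun_eq_iff sqnorm_fun_upd)
qed (use assms in \<open>simp_all add: coord_flip_eq_shear[of a b] measurable_shear distr_shear_lebesgue_d\<close>)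

lemma prod_power_count_list:
  fixes v :: "nat \<Rightarrow> real"
  assumes "set is \<subseteq> {..<d}"
  shows "(\<Prod>t<d. v t ^ count_list is t) = prod_list (map v is)"
  using assms
proof (induction "is")
  case (Cons i "is")
  have "(\<Prod>t<d. v t ^ count_list (i # is) t) = (\<Prod>t<d. (if t = i then v t else 1) * v t ^ count_list is t)"
    by (intro prod.cong) auto
  also have "\<dots> = v i * (\<Prod>t<d. v t ^ count_list is t)"
    using Cons.prems by (simp add: prod.distrib)
  finally show ?case using Cons by simp
qed simp

lemma prod_list_map_coord_flip:
  "prod_list (map (coord_flip a v) is) = (-1) ^ count_list is a * prod_list (map v is)"
  by (induction "is") (auto simp: coord_flip_def)

lemma integral_plane_rotation:
  fixes f :: "(nat \<Rightarrow> real) \<Rightarrow> real"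
  assumes "a < d" "b < d" "a \<noteq> b" "c\<^sup>2 + s\<^sup>2 = 1" "c \<noteq> -1"
    and [measurable]: "f \<in> borel_measurable (lebesgue_d d)"
  shows "(\<integral>v. f (plane_rotation a b c s v) \<partial>sphere_measure d) = (\<integral>v. f v \<partial>sphere_measure d)"
proof -
  have "plane_rotation a b c s \<in> sphere_measure d \<rightarrow>\<^sub>M lebesgue_d d"
    using measurable_plane_rotation[OF assms(1,2)] by (simp add: measurable_cong_sets[OF sets_sphere_measure refl])
  from integral_distr[OF this assms(6)] show ?thesis
    by (simp only: distr_sphere_measure_plane_rotation[OF assms(1-5)])
qed

lemma integral_coord_flip:
  fixes f :: "(nat \<Rightarrow> real) \<Rightarrow> real"
  assumes "a < d" "b < d" "a \<noteq> b"
    and [measurable]: "f \<in> borel_measurable (lebesgue_d d)"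
  shows "(\<integral>v. f (coord_flip a v) \<partial>sphere_measure d) = (\<integral>v. f v \<partial>sphere_measure d)"
proof -
  have "coord_flip a \<in> sphere_measure d \<rightarrow>\<^sub>M lebesgue_d d"
    using measurable_shear[OF assms(1,2)] by (simp add: measurable_cong_sets[OF sets_sphere_measure refl] coord_flip_eq_shear[of a b])
  from integral_distr[OF this assms(4)] show ?thesis
    by (simp only: distr_sphere_measure_coord_flip[OF assms(1-3)])
qed

lemma integral_monomial_odd_eq_0:
  assumes "a < d" "b < d" "a \<noteq> b" "set is \<subseteq> {..<d}" "odd (count_list is a)"
  shows "(\<integral>v. prod_list (map v is) \<partial>sphere_measure d) = 0"
proof -
  have [measurable]: "(\<lambda>v. prod_list (map v is)) \<in> borel_measurable (lebesgue_d d)"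
    using assms(4) by (induction "is") auto
  have "(\<integral>v. prod_list (map v is) \<partial>sphere_measure d)
      = (\<integral>v. prod_list (map (coord_flip a v) is) \<partial>sphere_measure d)"
    using assms(1-3) by (rule integral_coord_flip[symmetric]) measurable
  also have "\<dots> = - (\<integral>v. prod_list (map v is) \<partial>sphere_measure d)"
    using assms(5) by (simp add: prod_list_map_coord_flip)
  finally show ?thesis by simp
qed

lemma integrable_sphere_measure_bounded:
  fixes f :: "(nat \<Rightarrow> real) \<Rightarrow> real"
  assumes fin: "finite_measure (sphere_measure d)"
    and [measurable]: "f \<in> borel_measurable (lebesgue_d d)"
    and bound: "\<And>x. \<bar>f (sphere_proj d x)\<bar> \<le> B"
  shows "integrable (sphere_measure d) f"
proof -
  let ?U = "uniform_measure (lebesgue_d d) (unit_ball_d d)"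
  have proj: "sphere_proj d \<in> ?U \<rightarrow>\<^sub>M lebesgue_d d"
    by (simp add: measurable_cong_sets[of ?U "lebesgue_d d"])
  have "sphere_proj d -` space (lebesgue_d d) \<inter> space (lebesgue_d d) = space ?U"
    using measurable_space[OF sphere_proj_measurable] by auto
  then have "emeasure ?U (space ?U) = emeasure (sphere_measure d) (space (sphere_measure d))"
    by (simp add: sphere_measure_eq_distr_sphere_proj emeasure_distr[OF proj] del: emeasure_uniform_measure)
  then have "finite_measure ?U"
    using fin by (intro finite_measureI) (simp add: finite_measure.emeasure_finite)
  then have "integrable ?U (\<lambda>x. f (sphere_proj d x))"
    using bound proj by (intro finite_measure.integrable_const_bound[of _ _ B]) auto
  then show ?thesis
    unfolding sphere_measure_eq_distr_sphere_proj using proj by (subst integrable_distr_eq) auto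
qed

definition moment2 :: "nat \<Rightarrow> nat \<Rightarrow> nat \<Rightarrow> real" where
  "moment2 d i j = (\<integral>v. v i * v j \<partial>sphere_measure d)"

definition moment4 :: "nat \<Rightarrow> nat \<Rightarrow> nat \<Rightarrow> nat \<Rightarrow> nat \<Rightarrow> real" where
  "moment4 d i j k m = (\<integral>v. v i * v j * v k * v m \<partial>sphere_measure d)"

definition kronecker_delta :: "'a \<Rightarrow> 'a \<Rightarrow> real" where
  "kronecker_delta i j = of_bool (i = j)"

lemma sum_kronecker_delta:
  assumes "finite B" "a \<in> B"
  shows "(\<Sum>x\<in>B. f x * kronecker_delta a x) = f a"
proof -
  have "(\<Sum>x\<in>B. f x * kronecker_delta a x) = (\<Sum>x\<in>B. if a = x then f x else 0)"
    by (intro sum.cong) (auto simp: kronecker_delta_def)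
  then show ?thesis
    using assms by simp
qed

lemma sum_quartic_kronecker_delta:
  fixes p q :: "'a \<Rightarrow> real"
  assumes B: "finite B"
  shows "(\<Sum>j\<in>B. \<Sum>j'\<in>B. \<Sum>k\<in>B. \<Sum>k'\<in>B. p j * p j' * q k * q k' *
      (kronecker_delta j j' * kronecker_delta k k' + kronecker_delta j k * kronecker_delta j' k'
       + kronecker_delta j' k * kronecker_delta j k'))
    = (\<Sum>j\<in>B. (p j)\<^sup>2) * (\<Sum>k\<in>B. (q k)\<^sup>2) + 2 * (\<Sum>j\<in>B. p j * q j)\<^sup>2"
proof -
  let ?\<delta> = kronecker_delta
  have "(\<Sum>j\<in>B. \<Sum>j'\<in>B. \<Sum>k\<in>B. \<Sum>k'\<in>B. p j * p j' * q k * q k' * ?\<delta> j j' * ?\<delta> k k')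
      = (\<Sum>j\<in>B. \<Sum>j'\<in>B. \<Sum>k\<in>B. p j * p j' * q k * q k * ?\<delta> j j')"
    using B by (simp add: sum_kronecker_delta)
  also have "\<dots> = (\<Sum>j\<in>B. \<Sum>k\<in>B. \<Sum>j'\<in>B. (p j * q k * q k * p j') * ?\<delta> j j')"
    by (rule sum.cong[OF refl], subst sum.swap, intro sum.cong refl) (simp add: ac_simps)
  also have "\<dots> = (\<Sum>j\<in>B. (p j)\<^sup>2) * (\<Sum>k\<in>B. (q k)\<^sup>2)"
    using B by (simp add: sum_kronecker_delta) (simp add: power2_eq_square sum_product ac_simps)
  finally have 1: "(\<Sum>j\<in>B. \<Sum>j'\<in>B. \<Sum>k\<in>B. \<Sum>k'\<in>B. p j * p j' * q k * q k' * ?\<delta> j j' * ?\<delta> k k')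
      = (\<Sum>j\<in>B. (p j)\<^sup>2) * (\<Sum>k\<in>B. (q k)\<^sup>2)" .
  have "(\<Sum>j\<in>B. \<Sum>j'\<in>B. \<Sum>k\<in>B. \<Sum>k'\<in>B. p j * p j' * q k * q k' * ?\<delta> j k * ?\<delta> j' k')
      = (\<Sum>j\<in>B. \<Sum>j'\<in>B. \<Sum>k\<in>B. p j * p j' * q k * q j' * ?\<delta> j k)"
    using B by (simp add: sum_kronecker_delta)
  also have "\<dots> = (\<Sum>j\<in>B. p j * q j)\<^sup>2"
    using B by (simp add: sum_kronecker_delta) (simp add: power2_eq_square sum_product ac_simps)
  finally have 2: "(\<Sum>j\<in>B. \<Sum>j'\<in>B. \<Sum>k\<in>B. \<Sum>k'\<in>B. p j * p j' * q k * q k' * ?\<delta> j k * ?\<delta> j' k')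
      = (\<Sum>j\<in>B. p j * q j)\<^sup>2" .
  have "(\<Sum>j\<in>B. \<Sum>j'\<in>B. \<Sum>k\<in>B. \<Sum>k'\<in>B. p j * p j' * q k * q k' * ?\<delta> j' k * ?\<delta> j k')
      = (\<Sum>j\<in>B. \<Sum>j'\<in>B. \<Sum>k\<in>B. p j * p j' * q k * q j * ?\<delta> j' k)"
    using B by (simp add: sum_kronecker_delta)
  also have "\<dots> = (\<Sum>j\<in>B. p j * q j)\<^sup>2"
    using B by (simp add: sum_kronecker_delta) (simp add: power2_eq_square sum_product ac_simps)
  finally have 3: "(\<Sum>j\<in>B. \<Sum>j'\<in>B. \<Sum>k\<in>B. \<Sum>k'\<in>B. p j * p j' * q k * q k' * ?\<delta> j' k * ?\<delta> j k')
      = (\<Sum>j\<in>B. p j * q j)\<^sup>2" .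
  show ?thesis
    using 1 2 3 by (simp add: distrib_left sum.distrib mult.assoc)
qed

lemma moment2_eq_0:
  assumes "i < d" "j < d" "i \<noteq> j"
  shows "moment2 d i j = 0"
  using integral_monomial_odd_eq_0[of i d j "[i, j]"] assms by (simp add: moment2_def)

lemma moment4_eq_0:
  assumes "i < d" "j < d" "k < d" "m < d"
    and "i \<notin> {j, k, m} \<or> j \<notin> {i, k, m} \<or> k \<notin> {i, j, m} \<or> m \<notin> {i, j, k}"
  shows "moment4 d i j k m = 0"
proof -
  have "(\<integral>v. prod_list (map v [i, j, k, m]) \<partial>sphere_measure d) = 0"
    using assms(5)
  proof (elim disjE)
    assume "i \<notin> {j, k, m}"
    then show ?thesis using assms(1-4) by (intro integral_monomial_odd_eq_0[of i d j]) auto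
  next
    assume "j \<notin> {i, k, m}"
    then show ?thesis using assms(1-4) by (intro integral_monomial_odd_eq_0[of j d i]) auto
  next
    assume "k \<notin> {i, j, m}"
    then show ?thesis using assms(1-4) by (intro integral_monomial_odd_eq_0[of k d i]) auto
  next
    assume "m \<notin> {i, j, k}"
    then show ?thesis using assms(1-4) by (intro integral_monomial_odd_eq_0[of m d i]) auto
  qed
  then show ?thesis
    by (simp add: moment4_def mult.assoc)
qed

text \<open>A quarter turn in the \<open>(a, b)\<close>-plane carries \<open>v a\<close> to \<open>- v b\<close>.\<close>

lemma moment2_diag_eq:
  assumes "a < d" "b < d"
  shows "moment2 d a a = moment2 d b b"
proof (cases "a = b")
  case False
  have "(\<integral>v. plane_rotation a b 0 1 v a * plane_rotation a b 0 1 v a \<partial>sphere_measure d) = moment2 d a a"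
    unfolding moment2_def using assms False by (intro integral_plane_rotation) auto
  then show ?thesis
    using False by (simp add: plane_rotation_def moment2_def)
qed simp

lemma moment4_diag_eq:
  assumes "a < d" "b < d"
  shows "moment4 d a a a a = moment4 d b b b b"
proof (cases "a = b")
  case False
  let ?r = "plane_rotation a b 0 1"
  have "(\<integral>v. ?r v a * ?r v a * ?r v a * ?r v a \<partial>sphere_measure d) = moment4 d a a a a"
    unfolding moment4_def using assms False by (intro integral_plane_rotation) auto
  then show ?thesis
    using False by (simp add: plane_rotation_def moment4_def)
qed simp

text \<open>Besides transferring moments, the design hypothesis is what shows that \<open>sphere_measure d\<close> is
  a probability measure (degree 0) and supplies the normalisations \<open>\<Sum>\<^sub>i E v\<^sub>i\<^sup>2 = 1\<close> and
  \<open>\<Sum>\<^sub>i\<^sub>k E v\<^sub>i\<^sup>2 v\<^sub>k\<^sup>2 = 1\<close> (degrees 2 and 4, as \<open>|u\<^sub>l| = 1\<close>).\<close>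

locale projective_design =
  fixes d L :: nat and u :: "nat \<Rightarrow> nat \<Rightarrow> real"
  assumes design: "projective_2_design d L u"
begin

lemma L_pos: "L > 0"
  using design unfolding projective_2_design_def by auto

lemma sqnorm_design_point: "l < L \<Longrightarrow> sqnorm d (u l) = 1"
  using design unfolding projective_2_design_def by auto

lemma average_monomial:
  assumes "set is \<subseteq> {..<d}" "length is \<in> {0, 2, 4}"
  shows "(\<Sum>l<L. prod_list (map (u l) is)) / L = (\<integral>v. prod_list (map v is) \<partial>sphere_measure d)"
proof -
  have hom: "homogeneous_exps d (length is) {count_list is}"
    using assms(1) by (auto simp: homogeneous_exps_def sum_count_set count_list_0_iff)
  have poly: "poly_eval d {count_list is} (\<lambda>_. 1) = (\<lambda>v. prod_list (map v is))"
    using assms(1) by (simp add: poly_eval_def fun_eq_iff prod_power_count_list)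
  have "(1 / real L) * (\<Sum>l<L. poly_eval d {count_list is} (\<lambda>_. 1) (u l))
      = (\<integral>v. poly_eval d {count_list is} (\<lambda>_. 1) v \<partial>sphere_measure d)"
    using design assms(2) hom unfolding projective_2_design_def by blast
  then show ?thesis
    unfolding poly by simp
qed

lemma prob_space_sphere_measure: "prob_space (sphere_measure d)"
proof (rule prob_spaceI)
  have "measure (sphere_measure d) (space (sphere_measure d)) = 1"
    using average_monomial[of "[]"] L_pos by simp
  then show "emeasure (sphere_measure d) (space (sphere_measure d)) = 1"
    by (simp add: measure_def)
qed

sublocale sphere: prob_space "sphere_measure d"
  by (rule prob_space_sphere_measure)

lemma d_pos: "d > 0"
  using sqnorm_design_point[of 0] L_pos by (cases d) (auto simp: sqnorm_def)

lemma integrable_monomial: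
  assumes "set is \<subseteq> {..<d}"
  shows "integrable (sphere_measure d) (\<lambda>v. prod_list (map v is))"
proof (rule integrable_sphere_measure_bounded)
  show "(\<lambda>v. prod_list (map v is)) \<in> borel_measurable (lebesgue_d d)"
    using assms by (induction "is") auto
  show "\<bar>prod_list (map (sphere_proj d x) is)\<bar> \<le> 1" for x
    using assms by (induction "is") (auto simp: abs_mult intro!: mult_le_one abs_sphere_proj_le_1)
qed (rule sphere.finite_measure_axioms)

lemma average_moment2:
  assumes "i < d" "j < d"
  shows "(\<Sum>l<L. u l i * u l j) / L = moment2 d i j"
  using average_monomial[of "[i, j]"] assms by (simp add: moment2_def)

lemma average_moment4:
  assumes "i < d" "j < d" "k < d" "m < d"
  shows "(\<Sum>l<L. u l i * u l j * u l k * u l m) / L = moment4 d i j k m"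
  using average_monomial[of "[i, j, k, m]"] assms by (simp add: moment4_def mult.assoc)

lemma sum_moment2_diag: "(\<Sum>i<d. moment2 d i i) = 1"
proof -
  have "(\<Sum>i<d. moment2 d i i) = (\<Sum>l<L. sqnorm d (u l)) / L"
    by (simp flip: average_moment2 add: sum_divide_distrib sqnorm_def power2_eq_square)
       (rule sum.swap)
  also have "\<dots> = 1"
    using L_pos by (simp add: sqnorm_design_point)
  finally show ?thesis .
qed

lemma sum_moment4_pairs: "(\<Sum>i<d. \<Sum>k<d. moment4 d i i k k) = 1"
proof -
  have "(\<Sum>i<d. \<Sum>k<d. moment4 d i i k k) = (\<Sum>i<d. \<Sum>k<d. \<Sum>l<L. u l i * u l i * u l k * u l k) / L"
    by (simp flip: average_moment4 add: sum_divide_distrib)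
  also have "\<dots> = (\<Sum>l<L. sqnorm d (u l) * sqnorm d (u l)) / L"
    by (simp add: sqnorm_def power2_eq_square sum_product mult.assoc sum.swap[of _ "{..<L}"])
  also have "\<dots> = 1"
    using L_pos by (simp add: sqnorm_design_point)
  finally show ?thesis .
qed

text \<open>The rotation by \<open>\<pi>/4\<close> in the \<open>(a, b)\<close>-plane carries \<open>v a\<close> to \<open>(v a - v b) / \<surd>2\<close>; expand the
  fourth power and discard the odd moments.\<close>

lemma moment4_pair_eq:
  assumes ab: "a < d" "b < d" "a \<noteq> b"
  shows "3 * moment4 d a a b b = moment4 d a a a a"
proof -
  define c :: real where "c = sqrt 2 / 2"
  have c2: "c\<^sup>2 = 1 / 2"
    unfolding c_def by (simp add: power_divide)
  have c4: "c ^ 4 = 1 / 4"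
    using power_mult[of c 2 2] c2 by (simp add: power_divide)
  have "c \<ge> 0"
    unfolding c_def by simp
  then have "c \<noteq> -1"
    by linarith
  let ?r = "plane_rotation a b c c"
  have rot: "(\<integral>v. ?r v a * ?r v a * ?r v a * ?r v a \<partial>sphere_measure d) = moment4 d a a a a"
    unfolding moment4_def using ab c2 \<open>c \<noteq> -1\<close> by (intro integral_plane_rotation) auto
  have expand: "?r v a * ?r v a * ?r v a * ?r v a
     = (v a * v a * v a * v a) / 4 - v a * v a * v a * v b + 3 / 2 * (v a * v a * v b * v b)
       - v a * v b * v b * v b + (v b * v b * v b * v b) / 4" for v
  proof -
    have "?r v a * ?r v a * ?r v a * ?r v a = c ^ 4 * (v a - v b) ^ 4"
      using ab by (simp add: plane_rotation_def power4_eq_xxxx algebra_simps)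
    then show ?thesis
      unfolding c4 by (simp add: power4_eq_xxxx algebra_simps)
  qed
  have int: "integrable (sphere_measure d) (\<lambda>v. v i * v j * v k * v m)"
    if "i < d" "j < d" "k < d" "m < d" for i j k m
    using integrable_monomial[of "[i, j, k, m]"] that by (simp add: mult.assoc)
  have "moment4 d a a a a = (\<integral>v. ?r v a * ?r v a * ?r v a * ?r v a \<partial>sphere_measure d)"
    using rot by simp
  also have "\<dots> = moment4 d a a a a / 4 - moment4 d a a a b + 3 / 2 * moment4 d a a b b
      - moment4 d a b b b + moment4 d b b b b / 4"
    unfolding expand moment4_def using ab by (simp add: int integral_diff)
  finally have "moment4 d a a a a = moment4 d a a a a / 4 - moment4 d a a a b
      + 3 / 2 * moment4 d a a b b - moment4 d a b b b + moment4 d b b b b / 4" .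
  moreover have "moment4 d a a a b = 0" "moment4 d a b b b = 0"
    using ab by (simp_all add: moment4_eq_0)
  ultimately show ?thesis
    using moment4_diag_eq[of a d b] ab by simp
qed

lemma moment2_formula:
  assumes "i < d" "j < d"
  shows "moment2 d i j = kronecker_delta i j / d"
proof (cases "i = j")
  case True
  have "(\<Sum>k<d. moment2 d k k) = (\<Sum>k<d. moment2 d i i)"
    using assms by (intro sum.cong refl moment2_diag_eq) auto
  then have "(\<Sum>k<d. moment2 d k k) = d * moment2 d i i"
    by simp
  then show ?thesis
    using sum_moment2_diag d_pos True by (simp add: field_simps kronecker_delta_def)
qed (simp add: assms moment2_eq_0 kronecker_delta_def)

lemma moment4_diag:
  assumes "a < d"
  shows "moment4 d a a a a = 3 / (d * (d + 2))"
proof -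
  let ?M = "moment4 d a a a a"
  have entry: "moment4 d i i k k = ?M / 3 + (if k = i then 2 * ?M / 3 else 0)"
    if "i < d" "k < d" for i k
    using moment4_pair_eq[of i k] moment4_diag_eq[of i d a] moment4_diag_eq[of k d a] assms that
    by (cases "k = i") auto
  have "(\<Sum>i<d. \<Sum>k<d. moment4 d i i k k) = (\<Sum>i<d. d * ?M / 3 + 2 * ?M / 3)"
    by (intro sum.cong refl) (simp add: entry sum.distrib)
  then have "?M * (d * (d + 2)) = 3"
    using sum_moment4_pairs by (simp add: field_simps)
  then show ?thesis
    using d_pos by (intro eq_divide_imp) auto
qed

lemma moment4_pair:
  assumes "a < d" "b < d" "a \<noteq> b"
  shows "moment4 d a a b b = 1 / (d * (d + 2))"
  using moment4_pair_eq[OF assms] moment4_diag[OF assms(1)] by simp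

lemma moment4_formula:
  assumes "i < d" "j < d" "k < d" "m < d"
  shows "moment4 d i j k m
    = (kronecker_delta i j * kronecker_delta k m + kronecker_delta i k * kronecker_delta j m
       + kronecker_delta j k * kronecker_delta i m) / (d * (d + 2))"
proof -
  consider "i = j" "k = m" | "i = k" "j = m" "i \<noteq> j" | "i = m" "j = k" "i \<noteq> j"
    | "i \<notin> {j, k, m} \<or> j \<notin> {i, k, m} \<or> k \<notin> {i, j, m} \<or> m \<notin> {i, j, k}"
    by (cases "i = j"; cases "i = k"; cases "i = m"; cases "j = k"; cases "j = m"; cases "k = m") auto
  then show ?thesis
  proof cases
    case 1
    then show ?thesis
      using assms moment4_diag[of i] moment4_pair[of i k] by (cases "i = k") (auto simp: kronecker_delta_def)
  next
    case 2
    then have "moment4 d i j k m = moment4 d i i j j"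
      by (simp add: moment4_def ac_simps)
    then show ?thesis
      using 2 assms moment4_pair[of i j] by (simp add: kronecker_delta_def)
  next
    case 3
    then have "moment4 d i j k m = moment4 d i i j j"
      by (simp add: moment4_def ac_simps)
    then show ?thesis
      using 3 assms moment4_pair[of i j] by (simp add: kronecker_delta_def)
  next
    case 4
    have "moment4 d i j k m = 0"
      using assms 4 by (rule moment4_eq_0)
    moreover have "kronecker_delta i j * kronecker_delta k m = 0"
      "kronecker_delta i k * kronecker_delta j m = 0" "kronecker_delta j k * kronecker_delta i m = 0"
      using 4 unfolding kronecker_delta_def by auto
    ultimately show ?thesis
      by (metis add.right_neutral div_0)
  qed
qed

end

lemma sum_product_expand:
  fixes p q :: "'b \<Rightarrow> real" and w :: "'a \<Rightarrow> 'b \<Rightarrow> real"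
  shows "(\<Sum>l\<in>A. (\<Sum>j\<in>B. p j * w l j) * (\<Sum>k\<in>B. q k * w l k))
    = (\<Sum>j\<in>B. \<Sum>k\<in>B. p j * q k * (\<Sum>l\<in>A. w l j * w l k))"
proof -
  have "(\<Sum>l\<in>A. (\<Sum>j\<in>B. p j * w l j) * (\<Sum>k\<in>B. q k * w l k))
      = (\<Sum>l\<in>A. \<Sum>j\<in>B. \<Sum>k\<in>B. p j * q k * (w l j * w l k))"
    by (simp add: sum_product ac_simps)
  also have "\<dots> = (\<Sum>j\<in>B. \<Sum>k\<in>B. \<Sum>l\<in>A. p j * q k * (w l j * w l k))"
    by (simp only: sum.swap[of _ A])
  finally show ?thesis
    by (simp add: sum_distrib_left)
qed

lemma sum_square_product_expand:
  fixes p q :: "'b \<Rightarrow> real" and w :: "'a \<Rightarrow> 'b \<Rightarrow> real"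
  shows "(\<Sum>l\<in>A. (\<Sum>j\<in>B. p j * w l j)\<^sup>2 * (\<Sum>k\<in>B. q k * w l k)\<^sup>2)
    = (\<Sum>j\<in>B. \<Sum>j'\<in>B. \<Sum>k\<in>B. \<Sum>k'\<in>B.
         p j * p j' * q k * q k' * (\<Sum>l\<in>A. w l j * w l j' * w l k * w l k'))"
proof -
  have square: "(\<Sum>j\<in>B. f j)\<^sup>2 = (\<Sum>j\<in>B. \<Sum>j'\<in>B. f j * f j')" for f :: "'b \<Rightarrow> real"
    by (simp add: power2_eq_square sum_product)
  have "(\<Sum>j\<in>B. p j * w l j)\<^sup>2 * (\<Sum>k\<in>B. q k * w l k)\<^sup>2
      = (\<Sum>j\<in>B. \<Sum>j'\<in>B. p j * w l j * (p j' * w l j') * (\<Sum>k\<in>B. q k * w l k)\<^sup>2)" for l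
    unfolding square[of "\<lambda>j. p j * w l j"] by (simp add: sum_distrib_right)
  also have "\<dots> l = (\<Sum>j\<in>B. \<Sum>j'\<in>B. \<Sum>k\<in>B. \<Sum>k'\<in>B.
      p j * w l j * (p j' * w l j') * (q k * w l k * (q k' * w l k')))" for l
    unfolding square[of "\<lambda>k. q k * w l k"] by (simp add: sum_distrib_left)
  also have "\<dots> l = (\<Sum>j\<in>B. \<Sum>j'\<in>B. \<Sum>k\<in>B. \<Sum>k'\<in>B.
      p j * p j' * q k * q k' * (w l j * w l j' * w l k * w l k'))" for l
    by (intro sum.cong refl) (simp add: ac_simps)
  finally have "(\<Sum>l\<in>A. (\<Sum>j\<in>B. p j * w l j)\<^sup>2 * (\<Sum>k\<in>B. q k * w l k)\<^sup>2)
      = (\<Sum>l\<in>A. \<Sum>j\<in>B. \<Sum>j'\<in>B. \<Sum>k\<in>B. \<Sum>k'\<in>B.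
           p j * p j' * q k * q k' * (w l j * w l j' * w l k * w l k'))"
    by simp
  also have "\<dots> = (\<Sum>j\<in>B. \<Sum>j'\<in>B. \<Sum>k\<in>B. \<Sum>k'\<in>B. \<Sum>l\<in>A.
           p j * p j' * q k * q k' * (w l j * w l j' * w l k * w l k'))"
    by (simp only: sum.swap[of _ A])
  finally show ?thesis
    by (simp add: sum_distrib_left)
qed

lemma sum_square_diff:
  fixes f :: "'a \<Rightarrow> real" and c :: real
  shows "(\<Sum>l\<in>A. (f l - c)\<^sup>2) = (\<Sum>l\<in>A. (f l)\<^sup>2) - 2 * c * (\<Sum>l\<in>A. f l) + card A * c\<^sup>2"
proof -
  have "(\<Sum>l\<in>A. (f l - c)\<^sup>2) = (\<Sum>l\<in>A. (f l)\<^sup>2 - 2 * c * f l + c\<^sup>2)"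
    by (simp add: power2_diff algebra_simps)
  then show ?thesis
    by (simp add: sum.distrib sum_subtractf sum_distrib_left)
qed

lemma y_vec_eq:
  "y_vec n d A u x l i = d * ((\<Sum>j<n. A i j * u l j) * (\<Sum>j<n. x j * u l j))"
proof -
  have "(\<Sum>j<n. A i j * z_vec n d u l j) = sqrt d * (\<Sum>j<n. A i j * u l j)"
    "(\<Sum>j<n. z_vec n d u l j * x j) = sqrt d * (\<Sum>j<n. x j * u l j)"
    unfolding sum_distrib_left by (auto simp: z_vec_def intro!: sum.cong)
  then show ?thesis
    by (simp add: y_vec_def)
qed

context projective_design
begin

lemma sum_design_moment2:
  assumes "i < d" "j < d"
  shows "(\<Sum>l<L. u l i * u l j) = L * moment2 d i j"
  using average_moment2[OF assms] L_pos by (simp add: field_simps)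

lemma sum_design_moment4:
  assumes "i < d" "j < d" "k < d" "m < d"
  shows "(\<Sum>l<L. u l i * u l j * u l k * u l m) = L * moment4 d i j k m"
  using average_moment4[OF assms] L_pos by (simp add: field_simps)

lemma sum_design_bilinear:
  fixes p q :: "nat \<Rightarrow> real"
  assumes "n \<le> d"
  shows "(\<Sum>l<L. (\<Sum>j<n. p j * u l j) * (\<Sum>k<n. q k * u l k)) = real L / real d * (\<Sum>j<n. p j * q j)"
proof -
  have "(\<Sum>l<L. (\<Sum>j<n. p j * u l j) * (\<Sum>k<n. q k * u l k))
      = (\<Sum>j<n. \<Sum>k<n. p j * q k * (\<Sum>l<L. u l j * u l k))"
    by (rule sum_product_expand)
  also have "\<dots> = (\<Sum>j<n. \<Sum>k<n. real L / real d * (p j * q k) * kronecker_delta j k)"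
    using assms by (intro sum.cong refl) (simp add: sum_design_moment2 moment2_formula ac_simps)
  also have "\<dots> = (\<Sum>j<n. real L / real d * (p j * q j))"
    by (intro sum.cong refl sum_kronecker_delta) auto
  also have "\<dots> = real L / real d * (\<Sum>j<n. p j * q j)"
    by (simp add: sum_distrib_left)
  finally show ?thesis .
qed

lemma sum_design_quartic:
  fixes p q :: "nat \<Rightarrow> real"
  assumes "n \<le> d"
  shows "(\<Sum>l<L. (\<Sum>j<n. p j * u l j)\<^sup>2 * (\<Sum>k<n. q k * u l k)\<^sup>2)
    = real L / (real d * (real d + 2)) * ((\<Sum>j<n. (p j)\<^sup>2) * (\<Sum>k<n. (q k)\<^sup>2) + 2 * (\<Sum>j<n. p j * q j)\<^sup>2)"
proof -
  let ?\<delta> = kronecker_delta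
  have "(\<Sum>l<L. (\<Sum>j<n. p j * u l j)\<^sup>2 * (\<Sum>k<n. q k * u l k)\<^sup>2)
      = (\<Sum>j<n. \<Sum>j'<n. \<Sum>k<n. \<Sum>k'<n.
           p j * p j' * q k * q k' * (\<Sum>l<L. u l j * u l j' * u l k * u l k'))"
    by (rule sum_square_product_expand)
  also have "\<dots> = (\<Sum>j<n. \<Sum>j'<n. \<Sum>k<n. \<Sum>k'<n. real L / (real d * (real d + 2)) * (p j * p j' * q k * q k'
      * (?\<delta> j j' * ?\<delta> k k' + ?\<delta> j k * ?\<delta> j' k' + ?\<delta> j' k * ?\<delta> j k')))"
    using assms by (intro sum.cong refl, subst sum_design_moment4) (auto simp: moment4_formula algebra_simps add_divide_distrib)
  also have "\<dots> = real L / (real d * (real d + 2)) * ((\<Sum>j<n. (p j)\<^sup>2) * (\<Sum>k<n. (q k)\<^sup>2) + 2 * (\<Sum>j<n. p j * q j)\<^sup>2)"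
    by (simp only: sum_distrib_left[symmetric] sum_quartic_kronecker_delta finite_lessThan)
  finally show ?thesis .
qed

lemma sum_design_y:
  fixes A :: "nat \<Rightarrow> nat \<Rightarrow> real" and x :: "nat \<Rightarrow> real"
  assumes "n \<le> d"
  shows "(\<Sum>l<L. y_vec n d A u x l i) = L * (\<Sum>j<n. A i j * x j)"
proof -
  have "(\<Sum>l<L. y_vec n d A u x l i) = d * (\<Sum>l<L. (\<Sum>j<n. A i j * u l j) * (\<Sum>k<n. x k * u l k))"
    by (simp add: y_vec_eq sum_distrib_left)
  then show ?thesis
    using d_pos by (simp add: sum_design_bilinear[OF assms])
qed

lemma sum_design_y_squared:
  fixes A :: "nat \<Rightarrow> nat \<Rightarrow> real" and x :: "nat \<Rightarrow> real"
  assumes "n \<le> d" and x: "sqnorm n x = 1"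
  shows "(\<Sum>l<L. (y_vec n d A u x l i)\<^sup>2)
    = real L * real d / (real d + 2) * ((\<Sum>j<n. (A i j)\<^sup>2) + 2 * (\<Sum>j<n. A i j * x j)\<^sup>2)"
proof -
  have "(y_vec n d A u x l i)\<^sup>2 = d\<^sup>2 * ((\<Sum>j<n. A i j * u l j)\<^sup>2 * (\<Sum>k<n. x k * u l k)\<^sup>2)" for l
    by (simp add: y_vec_eq power_mult_distrib)
  then have "(\<Sum>l<L. (y_vec n d A u x l i)\<^sup>2)
      = d\<^sup>2 * (\<Sum>l<L. (\<Sum>j<n. A i j * u l j)\<^sup>2 * (\<Sum>k<n. x k * u l k)\<^sup>2)"
    by (simp add: sum_distrib_left)
  also have "\<dots> = d\<^sup>2 * (real L / (real d * (real d + 2)) * ((\<Sum>j<n. (A i j)\<^sup>2) + 2 * (\<Sum>j<n. A i j * x j)\<^sup>2))"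
    using x by (simp add: sum_design_quartic[OF assms(1)] sqnorm_def)
  also have "\<dots> = (d\<^sup>2 * (real L / (real d * (real d + 2))))
      * ((\<Sum>j<n. (A i j)\<^sup>2) + 2 * (\<Sum>j<n. A i j * x j)\<^sup>2)"
    by (simp only: mult.assoc)
  also have "d\<^sup>2 * (real L / (real d * (real d + 2))) = real L * (real d * real d / (real d * (real d + 2)))"
    by (simp add: power2_eq_square ac_simps)
  also have "real d * real d / (real d * (real d + 2)) = real d / (real d + 2)"
    using d_pos by simp
  finally show ?thesis
    by simp
qed

text \<open>\<open>E y\<^sup>2 - \<mu>\<^sup>2 \<le> |a|\<^sup>2 + \<mu>\<^sup>2\<close> since \<open>d / (d + 2) \<le> 1\<close>, and \<open>\<mu>\<^sup>2 \<le> |a|\<^sup>2\<close> by Cauchy--Schwarz as \<open>|x| = 1\<close>.\<close>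

lemma sum_design_y_deviation_le:
  fixes A :: "nat \<Rightarrow> nat \<Rightarrow> real" and x :: "nat \<Rightarrow> real"
  assumes "n \<le> d" and x: "sqnorm n x = 1"
  shows "(\<Sum>l<L. (y_vec n d A u x l i - (\<Sum>j<n. A i j * x j))\<^sup>2) \<le> 2 * L * (\<Sum>j<n. (A i j)\<^sup>2)"
proof -
  let ?y = "\<lambda>l. y_vec n d A u x l i"
  let ?\<mu> = "\<Sum>j<n. A i j * x j"
  let ?a = "\<Sum>j<n. (A i j)\<^sup>2"
  have "(\<Sum>l<L. (?y l - ?\<mu>)\<^sup>2) = (\<Sum>l<L. (?y l)\<^sup>2) - 2 * ?\<mu> * (\<Sum>l<L. ?y l) + L * ?\<mu>\<^sup>2"
    by (simp add: sum_square_diff)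
  also have "\<dots> = L * (real d / (real d + 2) * (?a + 2 * ?\<mu>\<^sup>2) - ?\<mu>\<^sup>2)"
    using assms by (simp add: sum_design_y_squared sum_design_y) (simp add: algebra_simps power2_eq_square)
  also have "\<dots> \<le> L * (?a + ?\<mu>\<^sup>2)"
  proof -
    have "0 \<le> ?a + 2 * ?\<mu>\<^sup>2"
      by (intro add_nonneg_nonneg sum_nonneg) auto
    then have "real d / (real d + 2) * (?a + 2 * ?\<mu>\<^sup>2) \<le> 1 * (?a + 2 * ?\<mu>\<^sup>2)"
      by (intro mult_right_mono) auto
    then have "real d / (real d + 2) * (?a + 2 * ?\<mu>\<^sup>2) - ?\<mu>\<^sup>2 \<le> ?a + ?\<mu>\<^sup>2"
      by simp
    then show ?thesis
      by (rule mult_left_mono) simp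
  qed
  also have "\<dots> \<le> L * (2 * ?a)"
  proof -
    have "?\<mu>\<^sup>2 \<le> ?a"
      using Cauchy_Schwarz_ineq_sum[where a = "A i" and b = x and I = "{..<n}"] x by (simp add: sqnorm_def)
    then have "?a + ?\<mu>\<^sup>2 \<le> 2 * ?a"
      by simp
    then show ?thesis
      by (rule mult_left_mono) simp
  qed
  finally show ?thesis
    by simp
qed

end

lemma expectation_pair_pmf:
  fixes h :: "'a \<times> 'b \<Rightarrow> real"
  assumes fA: "finite (set_pmf A)" and fB: "finite (set_pmf B)"
  shows "measure_pmf.expectation (pair_pmf A B) h = measure_pmf.expectation A (\<lambda>a. measure_pmf.expectation B (\<lambda>b. h (a, b)))"
proof -
  have "measure_pmf.expectation (pair_pmf A B) h = (\<Sum>z\<in>set_pmf A \<times> set_pmf B. h z * pmf (pair_pmf A B) z)"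
    by (rule integral_measure_pmf_real) (use fA fB in auto)
  also have "\<dots> = (\<Sum>(a,b)\<in>set_pmf A \<times> set_pmf B. h (a, b) * (pmf A a * pmf B b))"
    by (rule sum.cong) (auto simp: pmf_pair)
  also have "\<dots> = (\<Sum>a\<in>set_pmf A. \<Sum>b\<in>set_pmf B. h (a, b) * (pmf A a * pmf B b))"
    by (rule sum.cartesian_product[symmetric])
  also have "\<dots> = (\<Sum>a\<in>set_pmf A. (\<Sum>b\<in>set_pmf B. h (a, b) * pmf B b) * pmf A a)"
    by (simp add: sum_distrib_right sum_distrib_left ac_simps)
  also have "\<dots> = (\<Sum>a\<in>set_pmf A. measure_pmf.expectation B (\<lambda>b. h (a, b)) * pmf A a)"
    by (intro sum.cong refl) (subst integral_measure_pmf_real[where A="set_pmf B"], use fB in auto)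
  also have "\<dots> = measure_pmf.expectation A (\<lambda>a. measure_pmf.expectation B (\<lambda>b. h (a, b)))"
    by (rule integral_measure_pmf_real[symmetric]) (use fA in auto)
  finally show ?thesis .
qed

lemma expectation_square_sum_Pi_pmf:
  fixes g :: "nat \<Rightarrow> real" and U :: "nat pmf" and I :: "'a set"
  assumes fU: "finite (set_pmf U)" and mean0: "measure_pmf.expectation U g = 0"
    and fI: "finite I"
  shows "measure_pmf.expectation (Pi_pmf I dflt (\<lambda>_. U)) (\<lambda>\<omega>. (\<Sum>j\<in>I. g (\<omega> j))\<^sup>2)
       = real (card I) * measure_pmf.expectation U (\<lambda>y. (g y)\<^sup>2)"
  using fI
proof (induction I rule: finite_induct)
  case empty
  show ?case by simp
next
  case (insert x I)
  let ?Q = "Pi_pmf I dflt (\<lambda>_. U)"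
  have fQ: "finite (set_pmf ?Q)"
    using insert fU by (simp add: set_Pi_pmf finite_PiE_dflt)
  have S0: "measure_pmf.expectation ?Q (\<lambda>\<omega>. \<Sum>j\<in>I. g (\<omega> j)) = 0"
    using insert mean0 by (subst expectation_sum_Pi_pmf) (auto intro: integrable_measure_pmf_finite fU)
  have eq: "(\<Sum>j\<in>I. g (if j = x then a else f j)) = (\<Sum>j\<in>I. g (f j))" for f a
    using insert by (intro sum.cong) auto
  have "measure_pmf.expectation (Pi_pmf (insert x I) dflt (\<lambda>_. U)) (\<lambda>\<omega>. (\<Sum>j\<in>insert x I. g (\<omega> j))\<^sup>2)
      = measure_pmf.expectation (pair_pmf U ?Q) (\<lambda>(y, f). (g y + (\<Sum>j\<in>I. g (f j)))\<^sup>2)"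
    using insert by (simp add: Pi_pmf_insert case_prod_unfold eq)
  also have "\<dots> = measure_pmf.expectation U (\<lambda>y. measure_pmf.expectation ?Q (\<lambda>f. (g y + (\<Sum>j\<in>I. g (f j)))\<^sup>2))"
    by (subst expectation_pair_pmf[OF fU fQ]) simp
  also have "\<dots> = measure_pmf.expectation U (\<lambda>y. (g y)\<^sup>2 + 2 * g y * measure_pmf.expectation ?Q (\<lambda>f. \<Sum>j\<in>I. g (f j))
                 + measure_pmf.expectation ?Q (\<lambda>f. (\<Sum>j\<in>I. g (f j))\<^sup>2))"
  proof (intro Bochner_Integration.integral_cong refl)
    fix y
    have "(\<lambda>f. (g y + (\<Sum>j\<in>I. g (f j)))\<^sup>2) = (\<lambda>f. (g y)\<^sup>2 + (2 * g y) * (\<Sum>j\<in>I. g (f j)) + (\<Sum>j\<in>I. g (f j))\<^sup>2)"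
      by (simp add: power2_sum algebra_simps)
    thus "measure_pmf.expectation ?Q (\<lambda>f. (g y + (\<Sum>j\<in>I. g (f j)))\<^sup>2) =
        (g y)\<^sup>2 + 2 * g y * measure_pmf.expectation ?Q (\<lambda>f. \<Sum>j\<in>I. g (f j)) + measure_pmf.expectation ?Q (\<lambda>f. (\<Sum>j\<in>I. g (f j))\<^sup>2)"
      by (simp add: integrable_measure_pmf_finite[OF fQ])
  qed
  also have "\<dots> = measure_pmf.expectation U (\<lambda>y. (g y)\<^sup>2) + real (card I) * measure_pmf.expectation U (\<lambda>y. (g y)\<^sup>2)"
    using S0 insert.IH by (simp add: integrable_measure_pmf_finite[OF fU])
  also have "\<dots> = real (card (insert x I)) * measure_pmf.expectation U (\<lambda>y. (g y)\<^sup>2)"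
    using insert by (simp add: algebra_simps)
  finally show ?case .
qed

lemma prob_mean_deviation_Pi_pmf:
  fixes g :: "nat \<Rightarrow> real" and U :: "nat pmf"
  assumes fU: "finite (set_pmf U)" and mean0: "measure_pmf.expectation U g = 0"
    and J: "J > 0" and \<gamma>: "\<gamma> > 0"
  shows "measure_pmf.prob (Pi_pmf {..<J} dflt (\<lambda>_. U)) {\<omega>. \<bar>(1 / real J) * (\<Sum>j<J. g (\<omega> j))\<bar> \<ge> \<gamma>}
      \<le> measure_pmf.expectation U (\<lambda>y. (g y)\<^sup>2) / (real J * \<gamma>\<^sup>2)"
proof -
  let ?Q = "Pi_pmf {..<J} dflt (\<lambda>_. U)"
  have fQ: "finite (set_pmf ?Q)"
    using fU by (simp add: set_Pi_pmf finite_PiE_dflt)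
  have c: "(real J * \<gamma>)\<^sup>2 > 0" using J \<gamma> by simp
  have sub: "{\<omega>. \<bar>(1 / real J) * (\<Sum>j<J. g (\<omega> j))\<bar> \<ge> \<gamma>} \<subseteq> {\<omega> \<in> space (measure_pmf ?Q). (\<Sum>j<J. g (\<omega> j))\<^sup>2 \<ge> (real J * \<gamma>)\<^sup>2}"
  proof
    fix \<omega> assume "\<omega> \<in> {\<omega>. \<bar>(1 / real J) * (\<Sum>j<J. g (\<omega> j))\<bar> \<ge> \<gamma>}"
    hence "\<gamma> \<le> \<bar>\<Sum>j<J. g (\<omega> j)\<bar> / real J" by (simp add: abs_mult)
    hence "real J * \<gamma> \<le> \<bar>\<Sum>j<J. g (\<omega> j)\<bar>" using J by (simp add: field_simps)
    hence "(real J * \<gamma>)\<^sup>2 \<le> (\<bar>\<Sum>j<J. g (\<omega> j)\<bar>)\<^sup>2"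
      using J \<gamma> by (intro power_mono) auto
    thus "\<omega> \<in> {\<omega> \<in> space (measure_pmf ?Q). (\<Sum>j<J. g (\<omega> j))\<^sup>2 \<ge> (real J * \<gamma>)\<^sup>2}" by simp
  qed
  have "measure_pmf.prob ?Q {\<omega>. \<bar>(1 / real J) * (\<Sum>j<J. g (\<omega> j))\<bar> \<ge> \<gamma>}
      \<le> measure_pmf.prob ?Q {\<omega> \<in> space (measure_pmf ?Q). (\<Sum>j<J. g (\<omega> j))\<^sup>2 \<ge> (real J * \<gamma>)\<^sup>2}"
    by (rule measure_pmf.finite_measure_mono[OF sub]) simp
  also have "\<dots> \<le> measure_pmf.expectation ?Q (\<lambda>\<omega>. (\<Sum>j<J. g (\<omega> j))\<^sup>2) / (real J * \<gamma>)\<^sup>2"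
    by (rule integral_Markov_inequality_measure[where A="{}"]) (use c in \<open>auto intro: integrable_measure_pmf_finite[OF fQ]\<close>)
  also have "\<dots> = real J * measure_pmf.expectation U (\<lambda>y. (g y)\<^sup>2) / (real J * \<gamma>)\<^sup>2"
    using expectation_square_sum_Pi_pmf[OF fU mean0, of "{..<J}" dflt] by simp
  also have "\<dots> = measure_pmf.expectation U (\<lambda>y. (g y)\<^sup>2) / (real J * \<gamma>\<^sup>2)"
    using J by (simp add: power2_eq_square field_simps)
  finally show ?thesis .
qed

lemma prob_card_ge_Pi_pmf_le:
  fixes B :: "'a pmf" and Bad :: "'a set" and p :: real
  assumes p: "measure_pmf.prob B Bad \<le> p"
  shows "measure_pmf.prob (Pi_pmf {..<K} dflt (\<lambda>_. B)) {F. h \<le> card {k\<in>{..<K}. F k \<in> Bad}}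
    \<le> real (K choose h) * p ^ h"
proof -
  define Sets where "Sets = {S. S \<subseteq> {..<K} \<and> card S = h}"
  define Ev where "Ev S = Pi {..<K} (\<lambda>k. if k \<in> S then Bad else UNIV)" for S
  let ?Q = "Pi_pmf {..<K} dflt (\<lambda>_. B)"
  have "finite Sets"
    unfolding Sets_def by (rule finite_subset[of _ "Pow {..<K}"]) auto
  have cover: "{F. h \<le> card {k\<in>{..<K}. F k \<in> Bad}} \<subseteq> (\<Union>S\<in>Sets. Ev S)"
  proof
    fix F assume "F \<in> {F. h \<le> card {k\<in>{..<K}. F k \<in> Bad}}"
    then obtain S where "S \<subseteq> {k\<in>{..<K}. F k \<in> Bad}" "card S = h"
      by (auto elim: obtain_subset_with_card_n)
    then show "F \<in> (\<Union>S\<in>Sets. Ev S)"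
      unfolding Sets_def Ev_def by (intro UN_I[of S]) auto
  qed
  have each: "measure_pmf.prob ?Q (Ev S) \<le> p ^ h" if "S \<in> Sets" for S
  proof -
    have "measure_pmf.prob ?Q (Ev S) = (\<Prod>k<K. if k \<in> S then measure_pmf.prob B Bad else 1)"
      unfolding Ev_def by (subst measure_Pi_pmf_Pi) (auto intro!: prod.cong)
    also have "\<dots> = measure_pmf.prob B Bad ^ card S"
      using that unfolding Sets_def by (subst prod.If_cases) (auto simp: Int_absorb1)
    also have "\<dots> \<le> p ^ h"
      using that p unfolding Sets_def by (auto intro: power_mono)
    finally show ?thesis .
  qed
  have "measure_pmf.prob ?Q {F. h \<le> card {k\<in>{..<K}. F k \<in> Bad}} \<le> measure_pmf.prob ?Q (\<Union>S\<in>Sets. Ev S)"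
    using cover by (intro measure_pmf.finite_measure_mono) auto
  also have "\<dots> \<le> (\<Sum>S\<in>Sets. measure_pmf.prob ?Q (Ev S))"
    using \<open>finite Sets\<close> by (intro measure_pmf.finite_measure_subadditive_finite) auto
  also have "\<dots> \<le> card Sets * p ^ h"
    using sum_mono[OF each] by simp
  also have "card Sets = K choose h"
    unfolding Sets_def using n_subsets[of "{..<K}" h] by simp
  finally show ?thesis .
qed

lemma card_sort_map_upt:
  fixes f :: "nat \<Rightarrow> 'a::linorder"
  shows "card {k\<in>{..<K}. P (f k)} = card {t. t < K \<and> P (sort (map f [0..<K]) ! t)}"
proof -
  have "card {t. t < K \<and> P (sort (map f [0..<K]) ! t)} = length (filter P (sort (map f [0..<K])))"
    using length_filter_conv_card[of P "sort (map f [0..<K])"] by simp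
  also have "\<dots> = length (filter P (map f [0..<K]))"
    by (simp add: filter_sort)
  also have "\<dots> = card {t. t < K \<and> P (f t)}"
    by (auto simp: length_filter_conv_card intro!: arg_cong[where f = card])
  finally show ?thesis
    by (simp add: lessThan_def Collect_conj_eq)
qed

lemma median_le_upper_middle:
  assumes "K > 0"
  shows "median K f \<le> sort (map f [0..<K]) ! (K div 2)"
proof -
  let ?xs = "sort (map f [0..<K])"
  have "?xs ! (K div 2 - 1) \<le> ?xs ! (K div 2)"
    using assms by (intro sorted_nth_mono) auto
  then show ?thesis
    by (simp add: median_def Let_def)
qed

lemma lower_middle_le_median:
  assumes "K > 0"
  shows "sort (map f [0..<K]) ! ((K - 1) div 2) \<le> median K f"
proof -
  let ?xs = "sort (map f [0..<K])"
  have "?xs ! (K div 2 - 1) \<le> ?xs ! (K div 2)"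
    using assms by (intro sorted_nth_mono) auto
  moreover have "(K - 1) div 2 = (if odd K then K div 2 else K div 2 - 1)"
    using assms by (cases K) (auto elim: oddE)
  ultimately show ?thesis
    by (simp add: median_def Let_def)
qed

text \<open>A far median forces all entries above the upper middle, or all entries below the lower
  middle, of the sorted sample to be far.\<close>

lemma median_far_imp_half_far:
  fixes f :: "nat \<Rightarrow> real"
  assumes K: "K > 0" and far: "\<bar>median K f - c\<bar> \<ge> \<gamma>"
  shows "(K + 1) div 2 \<le> card {k\<in>{..<K}. \<bar>f k - c\<bar> \<ge> \<gamma>}"
proof -
  let ?xs = "sort (map f [0..<K])"
  let ?far = "\<lambda>v. \<bar>v - c\<bar> \<ge> \<gamma>"
  have count: "card T \<le> card {k\<in>{..<K}. ?far (f k)}" if "T \<subseteq> {..<K}" "\<forall>t\<in>T. ?far (?xs ! t)" for T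
    unfolding card_sort_map_upt[where P = ?far] using that by (intro card_mono) auto
  have mono: "?xs ! a \<le> ?xs ! b" if "a \<le> b" "b < K" for a b
    using that by (intro sorted_nth_mono) auto
  consider "median K f \<ge> c + \<gamma>" | "median K f \<le> c - \<gamma>"
    using far by linarith
  then show ?thesis
  proof cases
    case 1
    then have "card {K div 2..<K} \<le> card {k\<in>{..<K}. ?far (f k)}"
      using median_le_upper_middle[OF K, of f] mono by (intro count) (auto, fastforce)
    then show ?thesis by simp
  next
    case 2
    then have "card {..(K - 1) div 2} \<le> card {k\<in>{..<K}. ?far (f k)}"
      using lower_middle_le_median[OF K, of f] mono K by (intro count) (auto, fastforce)
    moreover have "card {..(K - 1) div 2} = (K + 1) div 2"
      using K by simp
    ultimately show ?thesis by simp
  qed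
qed

lemma choose_mult_power_le:
  fixes p :: real
  assumes "0 \<le> p" "K \<le> 2 * h"
  shows "(K choose h) * p ^ h \<le> (4 * p) ^ h"
proof -
  have "real (K choose h) \<le> 2 ^ K"
    using binomial_le_pow2[of K h] by (simp add: of_nat_le_iff[symmetric])
  also have "(2::real) ^ K \<le> 4 ^ h"
    using power_increasing[OF assms(2), of "2::real"] by (simp add: power_mult)
  finally show ?thesis
    using assms(1) by (simp add: power_mult_distrib mult_right_mono)
qed

lemma median_tail_bound:
  fixes p \<eta> :: real and m K :: nat
  assumes p: "0 \<le> p" "p \<le> 1 / (2 * (exp 1)\<^sup>2)" and m: "m > 0" and \<eta>: "\<eta> > 0"
    and K: "K \<ge> 2 * ln (m / \<eta>)"
  shows "(K choose ((K + 1) div 2)) * p ^ ((K + 1) div 2) \<le> \<eta> / m"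
proof -
  define h where "h = (K + 1) div 2"
  have Kh: "K \<le> 2 * h"
    unfolding h_def by simp
  have "4 * p \<le> exp (-1)"
  proof -
    have "4 * p \<le> 2 / (exp 1)\<^sup>2"
      using p by (simp add: field_simps)
    also have "\<dots> \<le> exp 1 / (exp 1)\<^sup>2"
      using exp_ge_add_one_self[of 1] by (intro divide_right_mono) auto
    also have "\<dots> = exp (-1)"
      by (simp add: power2_eq_square exp_minus field_simps)
    finally show ?thesis .
  qed
  have "(K choose h) * p ^ h \<le> (4 * p) ^ h"
    using choose_mult_power_le[OF p(1) Kh] .
  also have "\<dots> \<le> exp (-1) ^ h"
    using \<open>4 * p \<le> exp (-1)\<close> p by (intro power_mono) auto
  also have "\<dots> = exp (- real h)"
    by (simp add: exp_of_nat_mult[symmetric])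
  also have "\<dots> \<le> exp (ln (\<eta> / m))"
    using Kh K m \<eta> by (simp add: ln_div)
  also have "\<dots> = \<eta> / m"
    using m \<eta> by simp
  finally show ?thesis
    unfolding h_def .
qed

lemma Pi_pmf_product_eq_map_Pi_pmf:
  fixes U :: "'a pmf" and z :: 'a and J :: "'j set" and K :: "'k set"
  assumes J: "finite J" and K: "finite K"
  shows "Pi_pmf (J \<times> K) z (\<lambda>_. U)
    = map_pmf (\<lambda>F (j, k). F k j) (Pi_pmf K (\<lambda>_. z) (\<lambda>_. Pi_pmf J z (\<lambda>_. U)))"
proof (rule pmf_eqI)
  fix \<omega> :: "'j \<times> 'k \<Rightarrow> 'a"
  let ?Q = "Pi_pmf K (\<lambda>_. z) (\<lambda>_. Pi_pmf J z (\<lambda>_. U))"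
  define F where "F = (\<lambda>k j. \<omega> (j, k))"
  have "inj (\<lambda>F (j, k). F k j :: 'a)"
    by (intro injI) (metis case_prod_conv ext)
  moreover have "\<omega> = (\<lambda>(j, k). F k j)"
    by (auto simp: F_def)
  ultimately have "pmf (map_pmf (\<lambda>F (j, k). F k j) ?Q) \<omega> = pmf ?Q F"
    by (metis pmf_map_inj')
  also have "\<dots> = pmf (Pi_pmf (J \<times> K) z (\<lambda>_. U)) \<omega>"
  proof (cases "\<forall>x. x \<notin> J \<times> K \<longrightarrow> \<omega> x = z")
    case True
    then have "pmf ?Q F = (\<Prod>k\<in>K. \<Prod>j\<in>J. pmf U (\<omega> (j, k)))"
      using J K by (subst pmf_Pi') (auto simp: F_def pmf_Pi')
    also have "\<dots> = (\<Prod>x\<in>J \<times> K. pmf U (\<omega> x))"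
      by (subst prod.swap) (simp add: prod.cartesian_product)
    also have "\<dots> = pmf (Pi_pmf (J \<times> K) z (\<lambda>_. U)) \<omega>"
      using True J K by (subst pmf_Pi') auto
    finally show ?thesis .
  next
    case False
    then obtain j k where jk: "(j, k) \<notin> J \<times> K" "\<omega> (j, k) \<noteq> z"
      by auto
    have "pmf ?Q F = 0"
    proof (cases "k \<in> K")
      case True
      then have "pmf (Pi_pmf J z (\<lambda>_. U)) (F k) = 0"
        using jk J by (intro pmf_Pi_outside) (auto simp: F_def)
      then have "(\<Prod>k\<in>K. pmf (Pi_pmf J z (\<lambda>_. U)) (F k)) = 0"
        using True K by (intro prod_zero) auto
      then show ?thesis
        by (subst pmf_Pi[OF K]) simp
    next
      case False
      then show ?thesis
        using jk K by (intro pmf_Pi_outside) (auto simp: F_def fun_eq_iff)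
    qed
    moreover have "pmf (Pi_pmf (J \<times> K) z (\<lambda>_. U)) \<omega> = 0"
      using jk J K by (intro pmf_Pi_outside) auto
    ultimately show ?thesis
      by simp
  qed
  finally show "pmf (Pi_pmf (J \<times> K) z (\<lambda>_. U)) \<omega> = pmf (map_pmf (\<lambda>F (j, k). F k j) ?Q) \<omega>"
    by simp
qed

lemma sum_square_row_le_norm_2_inf:
  assumes "i < m"
  shows "(\<Sum>j<n. (A i j)\<^sup>2) \<le> (norm_2_inf m n A)\<^sup>2"
proof -
  have "sqrt (\<Sum>j<n. (A i j)\<^sup>2) \<le> norm_2_inf m n A"
    unfolding norm_2_inf_def using assms by (intro Max_ge) auto
  then have "(sqrt (\<Sum>j<n. (A i j)\<^sup>2))\<^sup>2 \<le> (norm_2_inf m n A)\<^sup>2"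
    by (intro power_mono) (auto intro: sum_nonneg)
  then show ?thesis
    by (simp add: sum_nonneg)
qed

context projective_design
begin

lemma prob_block_mean_far_le:
  fixes J :: nat and \<gamma> :: real and A :: "nat \<Rightarrow> nat \<Rightarrow> real" and x :: "nat \<Rightarrow> real"
  assumes "n \<le> d" "sqnorm n x = 1" "J > 0" "\<gamma> > 0"
  shows "measure_pmf.prob (Pi_pmf {..<J} 0 (\<lambda>_. pmf_of_set {..<L}))
      {f. \<bar>(1 / J) * (\<Sum>j<J. y_vec n d A u x (f j) i) - (\<Sum>j<n. A i j * x j)\<bar> \<ge> \<gamma>}
    \<le> 2 * (\<Sum>j<n. (A i j)\<^sup>2) / (J * \<gamma>\<^sup>2)"
proof -
  let ?U = "pmf_of_set {..<L}"
  define g where "g l = y_vec n d A u x l i - (\<Sum>j<n. A i j * x j)" for l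
  have L: "{..<L} \<noteq> {}"
    using L_pos by auto
  have mean: "measure_pmf.expectation ?U g = 0"
    using L sum_design_y[OF assms(1), of A x i] by (simp add: integral_pmf_of_set g_def sum_subtractf)
  have "measure_pmf.expectation ?U (\<lambda>l. (g l)\<^sup>2) = (\<Sum>l<L. (g l)\<^sup>2) / L"
    using L by (simp add: integral_pmf_of_set)
  also have "\<dots> \<le> 2 * L * (\<Sum>j<n. (A i j)\<^sup>2) / L"
    using sum_design_y_deviation_le[OF assms(1,2), of A i] by (intro divide_right_mono) (auto simp: g_def)
  finally have var: "measure_pmf.expectation ?U (\<lambda>l. (g l)\<^sup>2) \<le> 2 * (\<Sum>j<n. (A i j)\<^sup>2)"
    using L_pos by simp
  have "(1 / J) * (\<Sum>j<J. y_vec n d A u x (f j) i) - (\<Sum>j<n. A i j * x j)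
      = (1 / J) * (\<Sum>j<J. g (f j))" for f
    using assms(3) by (simp add: g_def sum_subtractf field_simps)
  then have "measure_pmf.prob (Pi_pmf {..<J} 0 (\<lambda>_. ?U))
      {f. \<bar>(1 / J) * (\<Sum>j<J. y_vec n d A u x (f j) i) - (\<Sum>j<n. A i j * x j)\<bar> \<ge> \<gamma>}
    \<le> measure_pmf.expectation ?U (\<lambda>l. (g l)\<^sup>2) / (J * \<gamma>\<^sup>2)"
    using prob_mean_deviation_Pi_pmf[OF _ mean assms(3,4)] L by simp
  also have "\<dots> \<le> 2 * (\<Sum>j<n. (A i j)\<^sup>2) / (J * \<gamma>\<^sup>2)"
    using var assms(3,4) by (simp add: divide_right_mono)
  finally show ?thesis .
qed

lemma prob_median_of_means_far_le:
  fixes J K m :: nat and \<gamma> \<eta> :: real and A :: "nat \<Rightarrow> nat \<Rightarrow> real" and x :: "nat \<Rightarrow> real"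
  assumes "n \<le> d" "sqnorm n x = 1" "J > 0" "K > 0" "\<gamma> > 0" "m > 0" "\<eta> > 0"
    and J: "4 * (exp 1)\<^sup>2 * (\<Sum>j<n. (A i j)\<^sup>2) \<le> J * \<gamma>\<^sup>2"
    and K: "K \<ge> 2 * ln (m / \<eta>)"
  shows "measure_pmf.prob (Pi_pmf ({..<J} \<times> {..<K}) 0 (\<lambda>_. pmf_of_set {..<L}))
      {\<omega>. \<bar>median K (\<lambda>k. (1 / J) * (\<Sum>j<J. y_vec n d A u x (\<omega> (j, k)) i)) - (\<Sum>j<n. A i j * x j)\<bar> \<ge> \<gamma>}
    \<le> \<eta> / m"
proof -
  let ?B = "Pi_pmf {..<J} 0 (\<lambda>_. pmf_of_set {..<L})"
  let ?far = "\<lambda>f. \<bar>(1 / J) * (\<Sum>j<J. y_vec n d A u x (f j) i) - (\<Sum>j<n. A i j * x j)\<bar> \<ge> \<gamma>"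
  have "measure_pmf.prob ?B {f. ?far f} \<le> 2 * (\<Sum>j<n. (A i j)\<^sup>2) / (J * \<gamma>\<^sup>2)"
    using prob_block_mean_far_le[OF assms(1-3,5)] .
  also have "\<dots> \<le> 1 / (2 * (exp 1)\<^sup>2)"
    using J assms(3,5) by (simp add: field_simps)
  finally have block: "measure_pmf.prob ?B {f. ?far f} \<le> 1 / (2 * (exp 1)\<^sup>2)" .
  have "measure_pmf.prob (Pi_pmf ({..<J} \<times> {..<K}) 0 (\<lambda>_. pmf_of_set {..<L}))
      {\<omega>. \<bar>median K (\<lambda>k. (1 / J) * (\<Sum>j<J. y_vec n d A u x (\<omega> (j, k)) i)) - (\<Sum>j<n. A i j * x j)\<bar> \<ge> \<gamma>}
    \<le> measure_pmf.prob (Pi_pmf {..<K} (\<lambda>_. 0) (\<lambda>_. ?B))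
        {F. (K + 1) div 2 \<le> card {k\<in>{..<K}. F k \<in> {f. ?far f}}}"
    unfolding Pi_pmf_product_eq_map_Pi_pmf[OF finite_lessThan finite_lessThan] measure_map_pmf
    using median_far_imp_half_far[OF assms(4)]
    by (intro measure_pmf.finite_measure_mono) auto
  also have "\<dots> \<le> (K choose ((K + 1) div 2)) * (1 / (2 * (exp 1)\<^sup>2)) ^ ((K + 1) div 2)"
    by (rule prob_card_ge_Pi_pmf_le[OF block])
  also have "\<dots> \<le> \<eta> / m"
    using assms(6,7) K by (intro median_tail_bound) auto
  finally show ?thesis .
qed

end

theorem theorem2p4:
  fixes m n d L J K :: nat
    and A :: "nat \<Rightarrow> nat \<Rightarrow> real"
    and u :: "nat \<Rightarrow> nat \<Rightarrow> real"
    and x :: "nat \<Rightarrow> real"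
    and \<gamma> \<eta> :: real
  assumes "d \<ge> n"
    and "projective_2_design d L u"
    and "sqnorm n x = 1"
    and "\<gamma> > 0" and "0 < \<eta>" and "\<eta> < 1"
    and "J > 0" and "K > 0"
    and "real J \<ge> 4 * (exp 1)\<^sup>2 * (norm_2_inf m n A)\<^sup>2 / \<gamma>\<^sup>2"
    and "real K \<ge> 2 * ln (real m / \<eta>)"
  defines "P \<equiv> Pi_pmf ({..<J} \<times> {..<K}) 0 (\<lambda>_. pmf_of_set {..<L})"
    and "muhat \<equiv> (\<lambda>\<omega> i. median K (\<lambda>k. (1 / real J) * (\<Sum>j<J. y_vec n d A u x (\<omega> (j, k)) i)))"
  shows "measure_pmf.prob P
           {\<omega>. \<forall>i<m. \<bar>muhat \<omega> i - (\<Sum>j<n. A i j * x j)\<bar> < \<gamma>} \<ge> 1 - \<eta>"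
proof -
  interpret projective_design d L u
    by unfold_locales fact
  define Fail where "Fail i = {\<omega>. \<bar>muhat \<omega> i - (\<Sum>j<n. A i j * x j)\<bar> \<ge> \<gamma>}" for i
  have row: "measure_pmf.prob P (Fail i) \<le> \<eta> / m" if "i < m" for i
  proof -
    have "4 * (exp 1)\<^sup>2 * (\<Sum>j<n. (A i j)\<^sup>2) \<le> 4 * (exp 1)\<^sup>2 * (norm_2_inf m n A)\<^sup>2"
      using sum_square_row_le_norm_2_inf[OF that] by simp
    also have "\<dots> \<le> J * \<gamma>\<^sup>2"
      using assms(4,9) by (simp add: field_simps)
    finally show ?thesis
      unfolding Fail_def P_def muhat_def using that assms
      by (intro prob_median_of_means_far_le) auto
  qed
  have "measure_pmf.prob P (\<Union>i<m. Fail i) \<le> (\<Sum>i<m. measure_pmf.prob P (Fail i))"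
    by (rule measure_pmf.finite_measure_subadditive_finite) auto
  also have "\<dots> \<le> (\<Sum>i<m. \<eta> / m)"
    by (rule sum_mono) (simp add: row)
  also have "\<dots> \<le> \<eta>"
    using assms(5) by (cases "m = 0") auto
  finally have "measure_pmf.prob P (\<Union>i<m. Fail i) \<le> \<eta>" .
  moreover have "{\<omega>. \<forall>i<m. \<bar>muhat \<omega> i - (\<Sum>j<n. A i j * x j)\<bar> < \<gamma>} = UNIV - (\<Union>i<m. Fail i)"
    unfolding Fail_def by auto
  ultimately show ?thesis
    using measure_pmf.prob_compl[of "\<Union>i<m. Fail i" P] by simp
qed

end
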